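(* In the setting described in the context, let $R$ be an $x$-portal and $\mathcal Q$ a non-empty set of $x$-portals, where each amoebot $u$ knows whether $\mathrm{portal}(u)=R$ and whether $\mathrm{portal}(u)\in\mathcal Q$. There is an algorithm in the reconfigurable circuit model (the election primitive) that within $O(1)$ rounds elects a single portal $R'\in\mathcal Q$, i.e., every amoebot $u$ learns whether $\mathrm{portal}(u)=R'$.
   Context: Geometric amoebot model with reconfigurable circuits: $G_\Delta=(V_\Delta,E_\Delta)$ is the infinite regular triangular grid graph; an amoebot structure is a finite set $X$ of grid nodes, each occupied by an anonymous constant-memory amoebot, with $G_X$ the induced subgraph, assumed connected. Each edge of $G_X$ is replaced by a constant number of external links with pins at both endpoints (labeling agreed by neighbors); each amoebot partitions its pins into partition sets; circuits are connected components of the graph on all partition sets joined by external links. In synchronous rounds every amoebot may update its state, change its partition and beep on partition sets; beeps are received at the start of the next round by all partition sets of the same circuit (without sender identity or count). Standing assumptions: $X$ has no holes (the subgraph induced by $V_\Delta\setminus X$ is connected), amoebots share compass orientation and chirality, and a unique leader is known. Grid edges are parallel to three axes $x$ (west–east), $y$, $z$. With $E_x$ the edges of $G_X$ parallel to $x$, the $x$-portals are the vertex sets of the connected components of $(X,E_x)$; $\mathrm{portal}(u)$ is the $x$-portal containing $u$. Two portals are adjacent if an edge of $G_X$ joins them; the $x$-portal graph $\mathcal P$ has the portals as vertices and joins adjacent portals; for hole-free $X$ it is a tree. The amoebots operate on the implicit portal graph, the spanning subgraph of $G_X$ with edge set $E_x$ together with the westernmost edge between each pair of adjacent $x$-portals.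 (Analogously for $y$- and $z$-portals.) *)

theory Defs
  imports Main
begin

type_synonym node = "int \<times> int"

text \<open>Axial coordinates. Direction 0 is east (the x-axis), directions are numbered
  counterclockwise (global compass and chirality); direction (d+3) mod 6 is opposite to d.\<close>
definition dir :: "nat \<Rightarrow> node" where
  "dir d = (case d mod 6 of 0 \<Rightarrow> (1,0) | Suc 0 \<Rightarrow> (0,1) | Suc (Suc 0) \<Rightarrow> (-1,1)
          | Suc (Suc (Suc 0)) \<Rightarrow> (-1,0) | Suc (Suc (Suc (Suc 0))) \<Rightarrow> (0,-1) | _ \<Rightarrow> (1,-1))"

definition nb :: "node \<Rightarrow> nat \<Rightarrow> node" where
  "nb u d = (fst u + fst (dir d), snd u + snd (dir d))"

definition grid_adj :: "node \<Rightarrow> node \<Rightarrow> bool" where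
  "grid_adj u v \<longleftrightarrow> (\<exists>d<6. v = nb u d)"

definition induced_connected :: "node set \<Rightarrow> bool" where
  "induced_connected S \<longleftrightarrow>
     (\<forall>u\<in>S. \<forall>v\<in>S. (u, v) \<in> {(a, b). a \<in> S \<and> b \<in> S \<and> grid_adj a b}\<^sup>*)"

definition hole_free :: "node set \<Rightarrow> bool" where
  "hole_free X \<longleftrightarrow> induced_connected (- X)"

definition x_edges :: "node set \<Rightarrow> (node \<times> node) set" where
  "x_edges X = {(u, v). u \<in> X \<and> v \<in> X \<and> (v = nb u 0 \<or> u = nb v 0)}"

definition portal :: "node set \<Rightarrow> node \<Rightarrow> node set" where
  "portal X u = {v. (u, v) \<in> (x_edges X)\<^sup>*}"

definition x_portals :: "node set \<Rightarrow> node set set" where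
  "x_portals X = portal X ` X"

text \<open>A pin is (d, i): the i-th external link (i < c) on the edge in direction d.
  Link i of u in direction d is joined to link i of the neighbour in the opposite
  direction (labelling agreed by neighbours).  A partition of the pins is given by a
  labelling lbl; pins with equal label form one partition set.  An amoebot beeps on
  the partition sets whose labels lie in its beep set.\<close>

type_synonym pin = "nat \<times> nat"

record algo =
  links :: nat
  states :: "nat set"
  init :: "(nat \<Rightarrow> bool) \<Rightarrow> bool \<Rightarrow> bool \<Rightarrow> bool \<Rightarrow> nat"
    \<comment> \<open>occupied neighbour directions, is leader, portal(u) = R, portal(u) in Q\<close>
  delta :: "nat \<Rightarrow> (pin \<Rightarrow> bool) \<Rightarrow> nat \<times> (pin \<Rightarrow> nat) \<times> nat set"
    \<comment> \<open>state, received beeps per pin \<mapsto> new state, partition, beeped partition sets\<close>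
  out_fn :: "nat \<Rightarrow> bool"

text \<open>Constant memory: finitely many states, closed under the transition function.\<close>
definition valid_algo :: "algo \<Rightarrow> bool" where
  "valid_algo A \<longleftrightarrow> finite (states A)
     \<and> (\<forall>nbr l r q. init A nbr l r q \<in> states A)
     \<and> (\<forall>s\<in>states A. \<forall>b. fst (delta A s b) \<in> states A)"

definition circ_edges :: "node set \<Rightarrow> nat \<Rightarrow> (node \<Rightarrow> pin \<Rightarrow> nat)
    \<Rightarrow> ((node \<times> nat) \<times> (node \<times> nat)) set" where
  "circ_edges X c lbl = {((u, lbl u (d, i)), (v, lbl v ((d + 3) mod 6, i))) | u v d i.
      u \<in> X \<and> v \<in> X \<and> d < 6 \<and> i < c \<and> v = nb u d}"

definition received :: "node set \<Rightarrow> nat \<Rightarrow> (node \<Rightarrow> pin \<Rightarrow> nat) \<Rightarrow> (node \<Rightarrow> nat set)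
    \<Rightarrow> node \<Rightarrow> pin \<Rightarrow> bool" where
  "received X c lbl bp u p \<longleftrightarrow>
     (\<exists>v\<in>X. \<exists>d i. d < 6 \<and> i < c \<and> lbl v (d, i) \<in> bp v \<and>
        ((u, lbl u p), (v, lbl v (d, i))) \<in> (circ_edges X c lbl)\<^sup>*)"

text \<open>Configuration after t rounds: states of all amoebots and the beeps they
  receive at the start of the next round.\<close>
fun run :: "algo \<Rightarrow> node set \<Rightarrow> node \<Rightarrow> (node \<Rightarrow> bool) \<Rightarrow> (node \<Rightarrow> bool) \<Rightarrow> nat
    \<Rightarrow> (node \<Rightarrow> nat) \<times> (node \<Rightarrow> pin \<Rightarrow> bool)" where
  "run A X ldr inR inQ 0 =
     ((\<lambda>u. init A (\<lambda>d. nb u d \<in> X) (u = ldr) (inR u) (inQ u)), (\<lambda>u p. False))"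
| "run A X ldr inR inQ (Suc t) =
     (let (s, b) = run A X ldr inR inQ t;
          act = (\<lambda>u. delta A (s u) (b u))
      in ((\<lambda>u. fst (act u)),
          received X (links A) (\<lambda>u. fst (snd (act u))) (\<lambda>u. snd (snd (act u)))))"

end

(*
  Every amoebot connects, for each maximal run of unoccupied directions around it (a gap),
  the link on which a walk along the boundary of the structure enters the gap to the link on
  which it leaves it.  This turns the boundary into a circuit, which the westernmost amoebots
  of R and of the portals in Q cut open at their western gap; since X has no holes, these gaps
  all lie on the outer boundary.  In the first round the westernmost amoebot w of R beeps into
  the outgoing half of its cut.  The beep follows the boundary walk and is heard exactly at the
  next cut, at an amoebot v.  If v were not in a Q-portal it would be w itself, so the walk went
  around the whole outer boundary without meeting another cut.  The boundary edges traversed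
  by the walk are however closed under turning around grid triangles, so by a parity argument
  on the triangular grid (a discrete Jordan curve theorem) the walk traverses every boundary
  edge, including the western gaps of the Q-portals, which cannot exist.  Hence the portal of v
  is elected: in the second round v beeps on the circuit along its portal, and in the third
  round every amoebot records whether it heard that beep.  A structure with an isolated
  amoebot consists of that amoebot only, which elects its own portal.
*)

theory Submission
  imports Defs
begin

(* Keeps direction 1 a numeral, the form in which nb_simps and the gap lemmas state it. *)
declare One_nat_def [simp del]

section \<open>Grid geometry\<close>

lemma less_6_cases: "(d::nat) < 6 \<Longrightarrow> d = 0 \<or> d = 1 \<or> d = 2 \<or> d = 3 \<or> d = 4 \<or> d = 5"
  by auto

lemma dir_simps:
  "dir 0 = (1, 0)" "dir 1 = (0, 1)" "dir 2 = (-1, 1)" "dir 3 = (-1, 0)" "dir 4 = (0, -1)" "dir 5 = (1, -1)"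
proof -
  have "(1::nat) mod 6 = Suc 0" "(2::nat) mod 6 = Suc (Suc 0)" "(3::nat) mod 6 = Suc (Suc (Suc 0))"
    "(4::nat) mod 6 = Suc (Suc (Suc (Suc 0)))" "(5::nat) mod 6 = Suc (Suc (Suc (Suc (Suc 0))))"
    by simp_all
  then show "dir 0 = (1, 0)" "dir 1 = (0, 1)" "dir 2 = (-1, 1)" "dir 3 = (-1, 0)" "dir 4 = (0, -1)"
    "dir 5 = (1, -1)"
    unfolding dir_def by (simp_all only:) simp_all
qed

lemma nb_simps:
  "nb u 0 = (fst u + 1, snd u)" "nb u 1 = (fst u, snd u + 1)" "nb u 2 = (fst u - 1, snd u + 1)"
  "nb u 3 = (fst u - 1, snd u)" "nb u 4 = (fst u, snd u - 1)" "nb u 5 = (fst u + 1, snd u - 1)"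
  by (simp_all add: nb_def dir_simps)

lemma nb_mod6: "nb u (d mod 6) = nb u d"
  by (simp add: nb_def dir_def)

lemma mod6_simps:
  "((d + 3) mod 6 + 3) mod 6 = (d::nat) mod 6"
  "((d + 3) mod 6 + 1) mod 6 = (d + 4) mod 6"
  "((d + 3) mod 6 + 5) mod 6 = (d + 2) mod 6"
  by presburger+

lemma nb_opposite: "nb (nb u d) ((d + 3) mod 6) = u"
proof -
  have "nb (nb u e) ((e + 3) mod 6) = u" if "e < 6" for e
    using that by (elim less_6_cases[elim_format] disjE) (simp_all add: nb_simps del: add_2_eq_Suc add_2_eq_Suc')
  from this[of "d mod 6"] show ?thesis by (simp only: nb_mod6 mod_add_left_eq)
qed

lemma nb_nb_plus2: "nb (nb u d) ((d + 2) mod 6) = nb u ((d + 1) mod 6)"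
proof -
  have "nb (nb u e) ((e + 2) mod 6) = nb u ((e + 1) mod 6)" if "e < 6" for e
    using that by (elim less_6_cases[elim_format] disjE) (simp_all add: nb_simps del: add_2_eq_Suc add_2_eq_Suc')
  from this[of "d mod 6"] show ?thesis by (simp only: nb_mod6 mod_add_left_eq)
qed

lemma nb_nb_plus4: "nb (nb u d) ((d + 4) mod 6) = nb u ((d + 5) mod 6)"
proof -
  have "nb (nb u e) ((e + 4) mod 6) = nb u ((e + 5) mod 6)" if "e < 6" for e
    using that by (elim less_6_cases[elim_format] disjE) (simp_all add: nb_simps del: add_2_eq_Suc add_2_eq_Suc')
  from this[of "d mod 6"] show ?thesis by (simp only: nb_mod6 mod_add_left_eq)
qed

lemma nb_dir_inj: "d < 6 \<Longrightarrow> d' < 6 \<Longrightarrow> nb u d = nb u d' \<Longrightarrow> d = d'"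
  by (elim less_6_cases[elim_format] disjE) (simp_all add: nb_simps prod_eq_iff)

lemma common_nb_dir:
  "b < 6 \<Longrightarrow> c < 6 \<Longrightarrow> d < 6 \<Longrightarrow> nb (nb u b) d = nb u c \<Longrightarrow>
     c = (b + 5) mod 6 \<or> c = (b + 1) mod 6"
  by (elim less_6_cases[elim_format] disjE) (simp_all add: nb_simps prod_eq_iff)

lemma grid_adj_nb: "d < 6 \<Longrightarrow> grid_adj u (nb u d)"
  unfolding grid_adj_def by blast

lemma grid_adj_sym: "grid_adj u v \<Longrightarrow> grid_adj v u"
  unfolding grid_adj_def by (metis mod_less_divisor nb_opposite zero_less_numeral)

section \<open>Paths of a partial injective successor function\<close>

lemma succ_path_terminates:
  fixes has_succ :: "'n \<Rightarrow> bool" and succ :: "'n \<Rightarrow> 'n"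
  assumes finite: "finite N" and start: "s \<in> N"
    and succ_in: "\<And>n. n \<in> N \<Longrightarrow> has_succ n \<Longrightarrow> succ n \<in> N"
    and succ_inj: "\<And>n m. n \<in> N \<Longrightarrow> m \<in> N \<Longrightarrow> has_succ n \<Longrightarrow> has_succ m \<Longrightarrow>
      succ n = succ m \<Longrightarrow> n = m"
    and no_pred: "\<And>n. n \<in> N \<Longrightarrow> has_succ n \<Longrightarrow> succ n \<noteq> s"
  shows "\<exists>k. \<not> has_succ ((succ ^^ k) s)"
proof (rule ccontr)
  assume "\<nexists>k. \<not> has_succ ((succ ^^ k) s)"
  then have all: "has_succ ((succ ^^ k) s)" for k by blast
  have path_in: "(succ ^^ j) s \<in> N" for j
    by (induction j) (use start succ_in all in auto)
  have "(succ ^^ i) s = (succ ^^ (i + d)) s \<Longrightarrow> s = (succ ^^ d) s" for i d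
  proof (induction i)
    case (Suc i)
    then show ?case using succ_inj[OF path_in path_in all all] by simp
  qed simp
  then have shift_back: "(succ ^^ i) s \<noteq> (succ ^^ (i + Suc d)) s" for i d
    using no_pred[OF path_in all] by (metis funpow.simps(2) o_apply)
  have "inj (\<lambda>j. (succ ^^ j) s)"
  proof (rule injI)
    fix i j assume eq: "(succ ^^ i) s = (succ ^^ j) s"
    show "i = j"
    proof (rule ccontr)
      assume "i \<noteq> j"
      then consider "j = i + Suc (j - i - 1)" | "i = j + Suc (i - j - 1)" by linarith
      then show False using eq shift_back by cases metis+
    qed
  qed
  moreover have "range (\<lambda>j. (succ ^^ j) s) \<subseteq> N" using path_in by blast
  ultimately show False using finite by (meson finite_imageD finite_subset infinite_UNIV_nat)
qed

lemma succ_path_component: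
  fixes E :: "('n \<times> 'n) set" and has_succ :: "'n \<Rightarrow> bool" and succ :: "'n \<Rightarrow> 'n"
  assumes finite: "finite N" and start: "s \<in> N"
    and succ_in: "\<And>n. n \<in> N \<Longrightarrow> has_succ n \<Longrightarrow> succ n \<in> N"
    and succ_inj: "\<And>n m. n \<in> N \<Longrightarrow> m \<in> N \<Longrightarrow> has_succ n \<Longrightarrow> has_succ m \<Longrightarrow>
      succ n = succ m \<Longrightarrow> n = m"
    and no_pred: "\<And>n. n \<in> N \<Longrightarrow> has_succ n \<Longrightarrow> succ n \<noteq> s"
    and succ_edge: "\<And>n. n \<in> N \<Longrightarrow> has_succ n \<Longrightarrow> (n, succ n) \<in> E"
    and edge_succ: "\<And>n m. (n, m) \<in> E \<Longrightarrow> n \<in> N \<Longrightarrow>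
      m \<in> N \<and> (has_succ n \<and> m = succ n \<or> has_succ m \<and> n = succ m)"
  defines "k \<equiv> LEAST k. \<not> has_succ ((succ ^^ k) s)"
  shows "\<forall>j<k. has_succ ((succ ^^ j) s)" and "\<not> has_succ ((succ ^^ k) s)"
    and "(s, m) \<in> E\<^sup>* \<longleftrightarrow> (\<exists>j\<le>k. m = (succ ^^ j) s)"
proof -
  show before: "\<forall>j<k. has_succ ((succ ^^ j) s)"
    unfolding k_def using not_less_Least by blast
  show last: "\<not> has_succ ((succ ^^ k) s)"
    unfolding k_def by (rule LeastI_ex) (rule succ_path_terminates[OF assms(1-5)])
  have path_in: "(succ ^^ j) s \<in> N" if "j \<le> k" for j
    using that by (induction j) (use start succ_in before in auto)
  show "(s, m) \<in> E\<^sup>* \<longleftrightarrow> (\<exists>j\<le>k. m = (succ ^^ j) s)"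
  proof
    assume "(s, m) \<in> E\<^sup>*"
    then show "\<exists>j\<le>k. m = (succ ^^ j) s"
    proof (induction rule: rtrancl_induct)
      case base
      then show ?case by (intro exI[of _ 0]) simp
    next
      case (step m m')
      then obtain j where j: "j \<le> k" "m = (succ ^^ j) s" by blast
      from edge_succ[OF step(2)] path_in[OF j(1)] j(2)
      consider "has_succ m" "m' = succ m" | "m' \<in> N" "has_succ m'" "m = succ m'" by blast
      then show ?case
      proof cases
        case 1
        then have "j < k" using j last by (cases "j = k") auto
        then show ?thesis using 1 j by (intro exI[of _ "Suc j"]) auto
      next
        case 2
        then obtain i where "j = Suc i" using j no_pred by (cases j) auto
        then have "m' = (succ ^^ i) s"
          using succ_inj[OF 2(1) path_in] 2 j before by simp
        then show ?thesis using \<open>j = Suc i\<close> j(1) by (intro exI[of _ i]) auto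
      qed
    qed
  next
    assume "\<exists>j\<le>k. m = (succ ^^ j) s"
    then obtain j where "j \<le> k" "m = (succ ^^ j) s" by blast
    then show "(s, m) \<in> E\<^sup>*"
    proof (induction j arbitrary: m)
      case (Suc j)
      then have "((succ ^^ j) s, m) \<in> E" using succ_edge[OF path_in] before by simp
      with Suc show ?case by (meson Suc_leD rtrancl.rtrancl_into_rtrancl)
    qed simp
  qed
qed

section \<open>Boundary pairs of hole-free structures\<close>

lemma odd_card_interval_step:
  fixes P :: "int \<Rightarrow> bool"
  assumes "N < x \<Longrightarrow> \<not> P x"
  shows "odd (card {x'. x \<le> x' \<and> x' \<le> N \<and> P x'}) =
    (P x \<noteq> odd (card {x'. x + 1 \<le> x' \<and> x' \<le> N \<and> P x'}))"
proof (cases "x \<le> N")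
  case True
  let ?A = "{x'. x + 1 \<le> x' \<and> x' \<le> N \<and> P x'}"
  have "finite ?A" by (rule finite_subset[of _ "{x + 1..N}"]) auto
  moreover have "{x'. x \<le> x' \<and> x' \<le> N \<and> P x'} = (if P x then insert x ?A else ?A)"
    using True by (auto simp: order.order_iff_strict)
  ultimately show ?thesis by simp
next
  case False
  then have "{x'. x \<le> x' \<and> x' \<le> N \<and> P x'} = {}" "{x'. x + 1 \<le> x' \<and> x' \<le> N \<and> P x'} = {}"
    by auto
  then show ?thesis using False assms by (simp only:) simp
qed

lemma row_parity_vertical:
  fixes t H V D :: "int \<Rightarrow> int \<Rightarrow> bool"
  assumes step: "\<And>x y. t x y = (H x y \<noteq> t (x + 1) y)"
    and lower: "\<And>x y. V x y = (H x y \<noteq> D x y)"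
    and upper: "\<And>x y. V (x + 1) y = (D x y \<noteq> H x (y + 1))"
    and east: "\<And>x y. N \<le> x \<Longrightarrow> \<not> t x y \<and> \<not> V x y"
  shows "(t x y \<noteq> t x (y + 1)) = V x y"
proof -
  have "N - int n \<le> x \<Longrightarrow> (t x y \<noteq> t x (y + 1)) = V x y" for n x
  proof (induction n arbitrary: x)
    case 0
    then show ?case using east by simp
  next
    case (Suc n)
    show ?case
    proof (cases "N - int n \<le> x")
      case False
      then have "(t (x + 1) y \<noteq> t (x + 1) (y + 1)) = V (x + 1) y" using Suc by simp
      then show ?thesis using step[of x y] step[of x "y + 1"] lower[of x y] upper[of x y] by blast
    qed (use Suc in blast)
  qed
  from this[of "nat (N - x)" x] show ?thesis by simp
qed

(* A mod-2 cocycle of the triangulated plane that vanishes far east is a coboundary: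
   integrate it along each row, starting in the east. *)
lemma triangle_cocycle_potential:
  fixes F :: "node \<Rightarrow> node \<Rightarrow> bool" and N :: int
  assumes sym: "\<And>p q. F p q = F q p"
    and tri: "\<And>p q r. grid_adj p q \<Longrightarrow> grid_adj q r \<Longrightarrow> grid_adj p r \<Longrightarrow> F p r = (F p q \<noteq> F q r)"
    and far: "\<And>p q. N \<le> fst p \<Longrightarrow> N \<le> fst q \<Longrightarrow> \<not> F p q"
  obtains s :: "node \<Rightarrow> bool" where "\<And>p q. grid_adj p q \<Longrightarrow> F p q = (s p \<noteq> s q)"
proof -
  define H where "H x y = F (x, y) (x + 1, y)" for x y
  define V where "V x y = F (x, y) (x, y + 1)" for x y
  define D where "D x y = F (x + 1, y) (x, y + 1)" for x y
  define t where "t x y = odd (card {x'. x \<le> x' \<and> x' \<le> N \<and> H x' y})" for x y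
  have tH: "t x y = (H x y \<noteq> t (x + 1) y)" for x y
    unfolding t_def by (rule odd_card_interval_step) (simp add: H_def far)
  have triangle_lower: "V x y = (H x y \<noteq> D x y)" for x y
    using tri[of "(x, y)" "(x + 1, y)" "(x, y + 1)"] grid_adj_nb[of 0 "(x, y)"]
      grid_adj_nb[of 2 "(x + 1, y)"] grid_adj_nb[of 1 "(x, y)"]
    unfolding V_def H_def D_def by (simp add: nb_simps)
  have triangle_upper: "V (x + 1) y = (D x y \<noteq> H x (y + 1))" for x y
    using tri[of "(x + 1, y)" "(x, y + 1)" "(x + 1, y + 1)"] grid_adj_nb[of 2 "(x + 1, y)"]
      grid_adj_nb[of 0 "(x, y + 1)"] grid_adj_nb[of 1 "(x + 1, y)"]
    unfolding V_def H_def D_def by (simp add: nb_simps)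
  have t_east: "\<not> t x y" if "N \<le> x" for x y
  proof -
    have "{x'. x \<le> x' \<and> x' \<le> N \<and> H x' y} = {}" using that far unfolding H_def by fastforce
    then show ?thesis unfolding t_def by (simp only:) simp
  qed
  have tV: "(t x y \<noteq> t x (y + 1)) = V x y" for x y
    by (rule row_parity_vertical[where t = t and H = H and V = V and D = D and N = N, OF tH triangle_lower triangle_upper])
      (use t_east far in \<open>simp add: V_def\<close>)
  have east: "F (x, y) (x + 1, y) = (t x y \<noteq> t (x + 1) y)" for x y
    using tH unfolding H_def by blast
  have west: "F (x, y) (x - 1, y) = (t x y \<noteq> t (x - 1) y)" for x y
    using tH[of "x - 1" y] sym unfolding H_def by auto
  have north: "F (x, y) (x, y + 1) = (t x y \<noteq> t x (y + 1))" for x y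
    using tV unfolding V_def by blast
  have south: "F (x, y) (x, y - 1) = (t x y \<noteq> t x (y - 1))" for x y
    using tV[of x "y - 1"] sym unfolding V_def by auto
  have north_west: "F (x, y) (x - 1, y + 1) = (t x y \<noteq> t (x - 1) (y + 1))" for x y
    using triangle_lower[of "x - 1" y] tH[of "x - 1" y] tV[of "x - 1" y] unfolding H_def V_def D_def by auto
  have south_east: "F (x, y) (x + 1, y - 1) = (t x y \<noteq> t (x + 1) (y - 1))" for x y
    using triangle_lower[of x "y - 1"] tH[of x "y - 1"] tV[of x "y - 1"] sym
    unfolding H_def V_def D_def by auto
  show thesis
  proof
    fix p q assume "grid_adj p q"
    then obtain d where "d < 6" "q = nb p d" unfolding grid_adj_def by blast
    then show "F p q = (t (fst p) (snd p) \<noteq> t (fst q) (snd q))"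
      using east west north south north_west south_east
      by (cases p) (elim less_6_cases[elim_format] disjE; simp add: nb_simps)
  qed
qed

lemma induced_connected_const:
  assumes "induced_connected S" "u \<in> S" "v \<in> S"
    and "\<And>a b. a \<in> S \<Longrightarrow> b \<in> S \<Longrightarrow> grid_adj a b \<Longrightarrow> f a = f b"
  shows "f u = f v"
proof -
  have "(u, v) \<in> {(a, b). a \<in> S \<and> b \<in> S \<and> grid_adj a b}\<^sup>*"
    using assms(1-3) unfolding induced_connected_def by blast
  then show ?thesis by (induction rule: rtrancl_induct) (auto dest: assms(4))
qed

(* Discrete Jordan argument: the potential of the cocycle induced by C is constant on X and on
   its connected complement, so C contains no boundary pair or all of them. *)
lemma boundary_pair_set_full:
  fixes X :: "node set" and C :: "(node \<times> node) set"
  assumes fin: "finite X" and conn: "induced_connected X" and hf: "hole_free X"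
    and inner: "\<And>u v e. u \<in> X \<Longrightarrow> v \<in> X \<Longrightarrow> e \<notin> X \<Longrightarrow> grid_adj u v \<Longrightarrow> grid_adj u e \<Longrightarrow>
      grid_adj v e \<Longrightarrow> (u, e) \<in> C \<longleftrightarrow> (v, e) \<in> C"
    and outer: "\<And>u e e'. u \<in> X \<Longrightarrow> e \<notin> X \<Longrightarrow> e' \<notin> X \<Longrightarrow> grid_adj u e \<Longrightarrow> grid_adj u e' \<Longrightarrow>
      grid_adj e e' \<Longrightarrow> (u, e) \<in> C \<longleftrightarrow> (u, e') \<in> C"
    and nonempty: "(u0, e0) \<in> C" "u0 \<in> X" "e0 \<notin> X" "grid_adj u0 e0"
    and boundary: "u \<in> X" "e \<notin> X" "grid_adj u e"
  shows "(u, e) \<in> C"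
proof -
  define F where "F p q \<longleftrightarrow> (p \<in> X \<and> q \<notin> X \<and> (p, q) \<in> C) \<or> (q \<in> X \<and> p \<notin> X \<and> (q, p) \<in> C)"
    for p q
  have sym: "F p q = F q p" for p q unfolding F_def by blast
  have tri: "F p r = (F p q \<noteq> F q r)" if "grid_adj p q" "grid_adj q r" "grid_adj p r" for p q r
  proof -
    have "grid_adj q p" "grid_adj r q" "grid_adj r p" using that grid_adj_sym by auto
    then show ?thesis
      using that inner[of p q r] inner[of p r q] inner[of q r p] outer[of p q r] outer[of q p r] outer[of r p q]
      unfolding F_def by blast
  qed
  obtain N where N: "\<And>c. c \<in> X \<Longrightarrow> fst c < N"
  proof -
    obtain M where "\<forall>x\<in>fst ` X. x \<le> M"
      using bdd_above_finite[of "fst ` X"] fin unfolding bdd_above_def by auto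
    then show thesis using that[of "M + 1"] by fastforce
  qed
  have far: "\<not> F p q" if "N \<le> fst p" "N \<le> fst q" for p q
    using that N unfolding F_def by fastforce
  obtain s :: "node \<Rightarrow> bool" where s: "\<And>p q. grid_adj p q \<Longrightarrow> F p q = (s p \<noteq> s q)"
    using triangle_cocycle_potential[of F N, OF sym tri far] by blast
  have "s u = s u0"
    by (rule induced_connected_const[OF conn boundary(1) nonempty(2)]) (use s F_def in blast)
  moreover have "s e = s e0"
    using hf unfolding hole_free_def
    by (rule induced_connected_const) (use boundary(2) nonempty(3) s F_def in auto)
  moreover have "s u0 \<noteq> s e0" using s[OF nonempty(4)] nonempty unfolding F_def by blast
  ultimately have "F u e" using s[OF boundary(3)] by simp
  then show ?thesis using boundary unfolding F_def by blast
qed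

section \<open>Gaps in the neighbourhood of an amoebot\<close>

fun first_occ :: "(nat \<Rightarrow> bool) \<Rightarrow> nat list \<Rightarrow> nat" where
  "first_occ oc [] = 0"
| "first_occ oc [d] = d"
| "first_occ oc (d # ds) = (if oc d then d else first_occ oc ds)"

(* If no direction is occupied the last candidate is returned; all lemmas about these
   functions assume an occupied neighbour. *)
definition occ_ccw_from :: "(nat \<Rightarrow> bool) \<Rightarrow> nat \<Rightarrow> nat" where
  "occ_ccw_from oc d =
     first_occ oc [d mod 6, (d + 1) mod 6, (d + 2) mod 6, (d + 3) mod 6, (d + 4) mod 6, (d + 5) mod 6]"

definition occ_cw_before :: "(nat \<Rightarrow> bool) \<Rightarrow> nat \<Rightarrow> nat" where
  "occ_cw_before oc d =
     first_occ oc [(d + 5) mod 6, (d + 4) mod 6, (d + 3) mod 6, (d + 2) mod 6, (d + 1) mod 6, d mod 6]"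

definition non_isolated :: "(nat \<Rightarrow> bool) \<Rightarrow> bool" where
  "non_isolated oc \<longleftrightarrow> (\<exists>d<6. oc d)"

lemma non_isolated_iff: "non_isolated oc \<longleftrightarrow> oc 0 \<or> oc 1 \<or> oc 2 \<or> oc 3 \<or> oc 4 \<or> oc 5"
  unfolding non_isolated_def
proof
  show "\<exists>d<6. oc d \<Longrightarrow> oc 0 \<or> oc 1 \<or> oc 2 \<or> oc 3 \<or> oc 4 \<or> oc 5"
    using less_6_cases by blast
  show "oc 0 \<or> oc 1 \<or> oc 2 \<or> oc 3 \<or> oc 4 \<or> oc 5 \<Longrightarrow> \<exists>d<6. oc d"
    by force
qed

lemma occ_ccw_from_less: "occ_ccw_from oc d < 6"
  unfolding occ_ccw_from_def by simp

lemma occ_cw_before_less: "occ_cw_before oc d < 6"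
  unfolding occ_cw_before_def by simp

(* A gap is a maximal run of unoccupied directions.  The boundary walk enters it from the
   occupied direction a just clockwise of it (gap_entry) and leaves it towards the occupied
   direction b just counterclockwise of it (gap_exit). *)
definition gap_exit :: "(nat \<Rightarrow> bool) \<Rightarrow> nat \<Rightarrow> bool" where
  "gap_exit oc b \<longleftrightarrow> b < 6 \<and> oc b \<and> \<not> oc ((b + 5) mod 6)"

definition gap_entry :: "(nat \<Rightarrow> bool) \<Rightarrow> nat \<Rightarrow> bool" where
  "gap_entry oc a \<longleftrightarrow> a < 6 \<and> oc a \<and> \<not> oc ((a + 1) mod 6)"

(* Label of the partition set joining entry a and exit b of a gap; p = 0 marks the incoming
   half of a gap that is cut. *)
definition gap_label :: "nat \<Rightarrow> nat \<Rightarrow> nat \<Rightarrow> nat" where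
  "gap_label a b p = 2 * (6 * a + b) + p"

definition gap_at :: "(nat \<Rightarrow> bool) \<Rightarrow> nat \<Rightarrow> nat" where
  "gap_at oc d = gap_label (occ_cw_before oc d) (occ_ccw_from oc d) 1"

definition exit_label :: "(nat \<Rightarrow> bool) \<Rightarrow> nat \<Rightarrow> nat" where
  "exit_label oc b = gap_label (occ_cw_before oc b) b 1"

definition west_gap :: "(nat \<Rightarrow> bool) \<Rightarrow> nat \<Rightarrow> bool" where
  "west_gap oc a \<longleftrightarrow> \<not> oc 3 \<and> occ_ccw_from oc ((a + 1) mod 6) = occ_ccw_from oc 3"

definition entry_label :: "(nat \<Rightarrow> bool) \<Rightarrow> bool \<Rightarrow> nat \<Rightarrow> nat" where
  "entry_label oc cuts a =
     gap_label a (occ_ccw_from oc ((a + 1) mod 6)) (if cuts \<and> west_gap oc a then 0 else 1)"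

lemmas gap_defs = occ_ccw_from_def occ_cw_before_def non_isolated_iff gap_exit_def gap_entry_def
  gap_at_def exit_label_def west_gap_def

lemma west_gap_entry:
  "\<not> oc 3 \<Longrightarrow> non_isolated oc \<Longrightarrow>
     gap_entry oc (occ_cw_before oc 3) \<and> west_gap oc (occ_cw_before oc 3)"
  by (cases "oc 0"; cases "oc 1"; cases "oc 2"; cases "oc 3"; cases "oc 4"; cases "oc 5";
      simp add: gap_defs del: add_2_eq_Suc add_2_eq_Suc')

lemma west_gap_exit:
  "\<not> oc 3 \<Longrightarrow> non_isolated oc \<Longrightarrow>
     gap_exit oc (occ_ccw_from oc 3) \<and> exit_label oc (occ_ccw_from oc 3) = gap_at oc 3"
  by (cases "oc 0"; cases "oc 1"; cases "oc 2"; cases "oc 3"; cases "oc 4"; cases "oc 5";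
      simp add: gap_defs del: add_2_eq_Suc add_2_eq_Suc')

lemma west_gap_entry_unique: "gap_entry oc a \<Longrightarrow> west_gap oc a \<Longrightarrow> a = occ_cw_before oc 3"
  unfolding gap_entry_def
  by (elim conjE less_6_cases[elim_format] disjE;
      cases "oc 0"; cases "oc 1"; cases "oc 2"; cases "oc 3"; cases "oc 4"; cases "oc 5";
      simp add: gap_defs del: add_2_eq_Suc add_2_eq_Suc')

lemma gap_at_before_exit: "gap_exit oc b \<Longrightarrow> gap_at oc ((b + 5) mod 6) = exit_label oc b"
  unfolding gap_exit_def
  by (elim conjE less_6_cases[elim_format] disjE;
      cases "oc 0"; cases "oc 1"; cases "oc 2"; cases "oc 3"; cases "oc 4"; cases "oc 5";
      simp add: gap_defs del: add_2_eq_Suc add_2_eq_Suc')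

lemma gap_at_after_entry:
  "gap_entry oc a \<Longrightarrow> gap_at oc ((a + 1) mod 6) = gap_label a (occ_ccw_from oc ((a + 1) mod 6)) 1"
  unfolding gap_entry_def
  by (elim conjE less_6_cases[elim_format] disjE;
      cases "oc 0"; cases "oc 1"; cases "oc 2"; cases "oc 3"; cases "oc 4"; cases "oc 5";
      simp add: gap_defs del: add_2_eq_Suc add_2_eq_Suc')

lemma gap_exit_after_entry:
  "gap_entry oc a \<Longrightarrow> gap_exit oc (occ_ccw_from oc ((a + 1) mod 6)) \<and>
     exit_label oc (occ_ccw_from oc ((a + 1) mod 6)) = gap_label a (occ_ccw_from oc ((a + 1) mod 6)) 1"
  unfolding gap_entry_def
  by (elim conjE less_6_cases[elim_format] disjE;
      cases "oc 0"; cases "oc 1"; cases "oc 2"; cases "oc 3"; cases "oc 4"; cases "oc 5";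
      simp add: gap_defs del: add_2_eq_Suc add_2_eq_Suc')

lemma gap_at_step:
  "d < 6 \<Longrightarrow> \<not> oc d \<Longrightarrow> \<not> oc ((d + 1) mod 6) \<Longrightarrow> non_isolated oc \<Longrightarrow>
     gap_at oc ((d + 1) mod 6) = gap_at oc d"
  by (elim less_6_cases[elim_format] disjE;
      cases "oc 0"; cases "oc 1"; cases "oc 2"; cases "oc 3"; cases "oc 4"; cases "oc 5";
      simp add: gap_defs del: add_2_eq_Suc add_2_eq_Suc')

lemma gap_label_less: "a < 6 \<Longrightarrow> b < 6 \<Longrightarrow> p < 2 \<Longrightarrow> gap_label a b p < 72"
  unfolding gap_label_def by (simp add: algebra_simps)

lemma gap_label_div2: "p < 2 \<Longrightarrow> gap_label a b p div 2 = 6 * a + b"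
  unfolding gap_label_def by simp

lemma gap_label_mod2: "p < 2 \<Longrightarrow> gap_label a b p mod 2 = p"
  unfolding gap_label_def by presburger

lemma gap_label_exit_dir: "b < 6 \<Longrightarrow> p < 2 \<Longrightarrow> gap_label a b p div 2 mod 6 = b"
  by (simp add: gap_label_div2)

lemma gap_label_eq_iff:
  assumes "b < 6" "b' < 6" "p < 2" "p' < 2"
  shows "gap_label a b p = gap_label a' b' p' \<longleftrightarrow> a = a' \<and> b = b' \<and> p = p'"
proof
  assume eq: "gap_label a b p = gap_label a' b' p'"
  have "p = p'" using gap_label_mod2[of p a b] gap_label_mod2[of p' a' b'] assms eq by simp
  moreover have ab: "6 * a + b = 6 * a' + b'" using gap_label_div2[of p a b] gap_label_div2[of p' a' b'] assms eq by simp
  moreover have "b = b'" using arg_cong[OF ab, of "\<lambda>l. l mod 6"] assms(1,2) by simp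
  ultimately show "a = a' \<and> b = b' \<and> p = p'" by simp
qed simp

lemma exit_label_less: "gap_exit oc b \<Longrightarrow> exit_label oc b < 72"
  unfolding exit_label_def gap_exit_def using gap_label_less occ_cw_before_less by simp

lemma exit_label_dir: "gap_exit oc b \<Longrightarrow> exit_label oc b div 2 mod 6 = b"
  unfolding exit_label_def gap_exit_def using gap_label_exit_dir by simp

lemma entry_label_less: "a < 6 \<Longrightarrow> entry_label oc cuts a < 72"
  unfolding entry_label_def using gap_label_less occ_ccw_from_less by simp

lemma entry_label_inj: "entry_label oc cuts a = entry_label oc' cuts' a' \<Longrightarrow> a = a'"
  unfolding entry_label_def by (simp add: gap_label_eq_iff occ_ccw_from_less)

(* Each edge carries two links, one for each direction of traversal: link exit_link d of u
   is link entry_link ((d + 3) mod 6) of nb u d. *)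
definition exit_link :: "nat \<Rightarrow> nat" where
  "exit_link d = (if 3 \<le> d then 1 else 0)"

definition entry_link :: "nat \<Rightarrow> nat" where
  "entry_link d = (if d < 3 then 1 else 0)"

lemma link_less: "exit_link d < 2" "entry_link d < 2"
  unfolding exit_link_def entry_link_def by auto

lemma exit_link_neq_entry_link: "exit_link d \<noteq> entry_link d"
  unfolding exit_link_def entry_link_def by auto

lemma exit_link_opposite: "d < 6 \<Longrightarrow> exit_link ((d + 3) mod 6) = entry_link d"
  by (elim less_6_cases[elim_format] disjE) (simp_all add: exit_link_def entry_link_def)

lemma entry_link_opposite: "d < 6 \<Longrightarrow> entry_link ((d + 3) mod 6) = exit_link d"
  by (elim less_6_cases[elim_format] disjE) (simp_all add: exit_link_def entry_link_def)

(* All unused pins share the label 100, above every gap label (< 72); nobody beeps there. *)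
definition boundary_partition :: "(nat \<Rightarrow> bool) \<Rightarrow> bool \<Rightarrow> pin \<Rightarrow> nat" where
  "boundary_partition oc cuts p =
     (if snd p = exit_link (fst p) \<and> gap_exit oc (fst p) then exit_label oc (fst p)
      else if snd p = entry_link (fst p) \<and> gap_entry oc (fst p) then entry_label oc cuts (fst p)
      else 100)"

lemma boundary_partition_exit: "gap_exit oc b \<Longrightarrow> boundary_partition oc cuts (b, exit_link b) = exit_label oc b"
  unfolding boundary_partition_def by simp

lemma boundary_partition_entry:
  "gap_entry oc a \<Longrightarrow> boundary_partition oc cuts (a, entry_link a) = entry_label oc cuts a"
  unfolding boundary_partition_def using exit_link_neq_entry_link[of a] by auto

lemma boundary_partition_cases:
  assumes "boundary_partition oc cuts (d, i) < 72"
  obtains "i = exit_link d" "gap_exit oc d" "boundary_partition oc cuts (d, i) = exit_label oc d"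
  | "i = entry_link d" "gap_entry oc d"
      "boundary_partition oc cuts (d, i) = entry_label oc cuts d"
  using assms exit_link_neq_entry_link[of d] unfolding boundary_partition_def
  by (auto split: if_splits)

lemma circ_edgesI:
  "u \<in> X \<Longrightarrow> nb u d \<in> X \<Longrightarrow> d < 6 \<Longrightarrow> i < c \<Longrightarrow>
     ((u, lbl u (d, i)), (nb u d, lbl (nb u d) ((d + 3) mod 6, i))) \<in> circ_edges X c lbl"
  unfolding circ_edges_def by blast

lemma circ_edgesE:
  assumes "(x, y) \<in> circ_edges X c lbl"
  obtains u d i where "x = (u, lbl u (d, i))" "y = (nb u d, lbl (nb u d) ((d + 3) mod 6, i))"
    "u \<in> X" "nb u d \<in> X" "d < 6" "i < c"
  using assms unfolding circ_edges_def by blast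

lemma sym_circ_edges: "sym (circ_edges X c lbl)"
proof (rule symI)
  fix x y assume "(x, y) \<in> circ_edges X c lbl"
  then obtain u d i where e: "x = (u, lbl u (d, i))" "y = (nb u d, lbl (nb u d) ((d + 3) mod 6, i))"
    "u \<in> X" "nb u d \<in> X" "d < 6" "i < c"
    by (rule circ_edgesE)
  have "((nb u d, lbl (nb u d) ((d + 3) mod 6, i)),
      (nb (nb u d) ((d + 3) mod 6), lbl (nb (nb u d) ((d + 3) mod 6)) (((d + 3) mod 6 + 3) mod 6, i)))
      \<in> circ_edges X c lbl"
    by (rule circ_edgesI) (simp_all add: e nb_opposite)
  then show "(y, x) \<in> circ_edges X c lbl" using e by (simp add: nb_opposite mod6_simps)
qed

lemma circ_reach_sym: "(x, y) \<in> (circ_edges X c lbl)\<^sup>* \<Longrightarrow> (y, x) \<in> (circ_edges X c lbl)\<^sup>*"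
  using sym_rtrancl[OF sym_circ_edges] by (rule symD)

lemma received_single_source:
  assumes beeps: "\<And>v. v \<in> X \<Longrightarrow> bp v = (if v = w then {lbl w (d, i)} else {})"
    and w: "w \<in> X" "d < 6" "i < c"
  shows "received X c lbl bp u p \<longleftrightarrow> ((w, lbl w (d, i)), (u, lbl u p)) \<in> (circ_edges X c lbl)\<^sup>*"
proof
  assume "received X c lbl bp u p"
  then obtain v d' i' where "v \<in> X" "lbl v (d', i') \<in> bp v"
    and reach: "((u, lbl u p), (v, lbl v (d', i'))) \<in> (circ_edges X c lbl)\<^sup>*"
    unfolding received_def by blast
  then have "(v, lbl v (d', i')) = (w, lbl w (d, i))" using beeps by (auto split: if_splits)
  then show "((w, lbl w (d, i)), (u, lbl u p)) \<in> (circ_edges X c lbl)\<^sup>*"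
    using circ_reach_sym[OF reach] by (simp only:)
next
  assume reach: "((w, lbl w (d, i)), (u, lbl u p)) \<in> (circ_edges X c lbl)\<^sup>*"
  have "lbl w (d, i) \<in> bp w" using beeps w(1) by simp
  then show "received X c lbl bp u p"
    unfolding received_def using w circ_reach_sym[OF reach] by blast
qed

section \<open>The boundary circuit\<close>

definition occ :: "node set \<Rightarrow> node \<Rightarrow> nat \<Rightarrow> bool" where
  "occ X u d \<longleftrightarrow> nb u d \<in> X"

lemma occ_mod6: "occ X u (d mod 6) = occ X u d"
  unfolding occ_def by (simp add: nb_mod6)

lemma gap_entry_opposite:
  "u \<in> X \<Longrightarrow> gap_entry (occ X (nb u d)) ((d + 3) mod 6) \<longleftrightarrow> \<not> occ X u ((d + 5) mod 6)"
  unfolding gap_entry_def occ_def by (simp add: mod6_simps nb_opposite nb_nb_plus4)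

lemma gap_exit_opposite:
  "u \<in> X \<Longrightarrow> gap_exit (occ X (nb u d)) ((d + 3) mod 6) \<longleftrightarrow> \<not> occ X u ((d + 1) mod 6)"
  unfolding gap_exit_def occ_def by (simp add: mod6_simps nb_opposite nb_nb_plus2 del: add_2_eq_Suc')

definition boundary_lbl :: "node set \<Rightarrow> (node \<Rightarrow> bool) \<Rightarrow> node \<Rightarrow> pin \<Rightarrow> nat" where
  "boundary_lbl X K u = boundary_partition (occ X u) (K u)"

(* Partition sets are the pairs (amoebot, label), the nodes of circ_edges; walk_step reads the
   exit direction off the label (see gap_label_exit_dir) and moves to the entry partition set of
   the neighbour in that direction. *)
definition is_exit :: "node set \<Rightarrow> node \<times> nat \<Rightarrow> bool" where
  "is_exit X n \<longleftrightarrow>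
     fst n \<in> X \<and> (\<exists>b. gap_exit (occ X (fst n)) b \<and> snd n = exit_label (occ X (fst n)) b)"

definition walk_step :: "node set \<Rightarrow> (node \<Rightarrow> bool) \<Rightarrow> node \<times> nat \<Rightarrow> node \<times> nat" where
  "walk_step X K n =
     (let b = snd n div 2 mod 6; v = nb (fst n) b in (v, entry_label (occ X v) (K v) ((b + 3) mod 6)))"

(* The outgoing and the incoming half of the western gap of a cutting amoebot. *)
definition west_exit :: "node set \<Rightarrow> node \<Rightarrow> node \<times> nat" where
  "west_exit X v = (v, gap_at (occ X v) 3)"

definition west_entry :: "node set \<Rightarrow> node \<Rightarrow> node \<times> nat" where
  "west_entry X v = (v, gap_label (occ_cw_before (occ X v) 3) (occ_ccw_from (occ X v) 3) 0)"

lemma walk_step_exit: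
  "gap_exit (occ X u) b \<Longrightarrow>
     walk_step X K (u, exit_label (occ X u) b) = (nb u b, entry_label (occ X (nb u b)) (K (nb u b)) ((b + 3) mod 6))"
  unfolding walk_step_def by (simp add: exit_label_dir Let_def)

lemma is_exitE:
  assumes "is_exit X n"
  obtains u b where "n = (u, exit_label (occ X u) b)" "u \<in> X" "gap_exit (occ X u) b" "nb u b \<in> X"
    "walk_step X K n = (nb u b, entry_label (occ X (nb u b)) (K (nb u b)) ((b + 3) mod 6))"
  using assms walk_step_exit unfolding is_exit_def gap_exit_def occ_def by (metis prod.collapse)

lemma is_exit_less: "is_exit X n \<Longrightarrow> n \<in> X \<times> {..<72}"
  unfolding is_exit_def using exit_label_less by (cases n) auto

lemma boundary_circ_edge:
  assumes edge: "((u, L), (v, M)) \<in> circ_edges X 2 (boundary_lbl X K)" and "L < 72"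
  shows "u \<in> X \<and> v \<in> X \<and> M < 72 \<and>
    (is_exit X (u, L) \<and> (v, M) = walk_step X K (u, L) \<or> is_exit X (v, M) \<and> (u, L) = walk_step X K (v, M))"
proof -
  obtain d i where e: "L = boundary_lbl X K u (d, i)" "v = nb u d"
    "M = boundary_lbl X K v ((d + 3) mod 6, i)" "u \<in> X" "v \<in> X" "d < 6" "i < 2"
    using edge by (rule circ_edgesE) auto
  have opp: "((d + 3) mod 6 + 3) mod 6 = d" "nb v ((d + 3) mod 6) = u"
    using e(2,6) by (simp_all add: mod6_simps nb_opposite)
  have "boundary_partition (occ X u) (K u) (d, i) < 72" using \<open>L < 72\<close> e(1) unfolding boundary_lbl_def by simp
  then show ?thesis
  proof (cases rule: boundary_partition_cases)
    case 1
    then have "gap_entry (occ X v) ((d + 3) mod 6)"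
      using gap_entry_opposite[OF e(4), of d] e(2) unfolding gap_exit_def by simp
    then have "M = entry_label (occ X v) (K v) ((d + 3) mod 6)"
      using e(3) 1(1) entry_link_opposite[OF e(6), symmetric] boundary_partition_entry
      unfolding boundary_lbl_def by simp
    then show ?thesis using 1 e walk_step_exit[OF 1(2)] entry_label_less
      unfolding is_exit_def boundary_lbl_def by auto
  next
    case 2
    then have exit: "gap_exit (occ X v) ((d + 3) mod 6)"
      using gap_exit_opposite[OF e(4), of d] e(2) unfolding gap_entry_def by simp
    then have "M = exit_label (occ X v) ((d + 3) mod 6)"
      using e(3) 2(1) exit_link_opposite[OF e(6), symmetric] boundary_partition_exit
      unfolding boundary_lbl_def by simp
    then show ?thesis using 2 e exit walk_step_exit[OF exit] exit_label_less[OF exit] opp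
      unfolding is_exit_def boundary_lbl_def by auto
  qed
qed

lemma walk_step_edge:
  assumes "is_exit X n"
  shows "(n, walk_step X K n) \<in> circ_edges X 2 (boundary_lbl X K)"
proof -
  obtain u b where n: "n = (u, exit_label (occ X u) b)" and u: "u \<in> X" "nb u b \<in> X"
    and exit: "gap_exit (occ X u) b"
    using assms by (rule is_exitE)
  have b: "b < 6" "\<not> occ X u ((b + 5) mod 6)" using exit unfolding gap_exit_def by auto
  have "gap_entry (occ X (nb u b)) ((b + 3) mod 6)" using gap_entry_opposite[OF u(1)] b by simp
  then have "boundary_lbl X K (nb u b) ((b + 3) mod 6, exit_link b)
      = entry_label (occ X (nb u b)) (K (nb u b)) ((b + 3) mod 6)"
    using boundary_partition_entry entry_link_opposite[OF b(1), symmetric] unfolding boundary_lbl_def by simp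
  moreover have "boundary_lbl X K u (b, exit_link b) = exit_label (occ X u) b"
    using boundary_partition_exit[OF exit] unfolding boundary_lbl_def by simp
  moreover have "((u, boundary_lbl X K u (b, exit_link b)),
      (nb u b, boundary_lbl X K (nb u b) ((b + 3) mod 6, exit_link b))) \<in> circ_edges X 2 (boundary_lbl X K)"
    using circ_edgesI[OF u b(1)] link_less by blast
  ultimately show ?thesis unfolding n walk_step_exit[OF exit] by simp
qed

lemma walk_step_inj:
  assumes "is_exit X n" "is_exit X m" "walk_step X K n = walk_step X K m"
  shows "n = m"
proof -
  obtain u b where n: "n = (u, exit_label (occ X u) b)" and b: "gap_exit (occ X u) b"
    using assms(1) by (rule is_exitE)
  obtain u' b' where m: "m = (u', exit_label (occ X u') b')" and b': "gap_exit (occ X u') b'"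
    using assms(2) by (rule is_exitE)
  have eq: "(nb u b, entry_label (occ X (nb u b)) (K (nb u b)) ((b + 3) mod 6))
      = (nb u' b', entry_label (occ X (nb u' b')) (K (nb u' b')) ((b' + 3) mod 6))"
    using assms(3) unfolding n m walk_step_exit[OF b] walk_step_exit[OF b'] .
  have v: "nb u b = nb u' b'" using arg_cong[OF eq, of fst] by simp
  have "entry_label (occ X (nb u b)) (K (nb u b)) ((b + 3) mod 6)
      = entry_label (occ X (nb u' b')) (K (nb u' b')) ((b' + 3) mod 6)"
    using arg_cong[OF eq, of snd] by simp
  then have a: "(b + 3) mod 6 = (b' + 3) mod 6" by (rule entry_label_inj)
  have "b < 6" "b' < 6" using b b' unfolding gap_exit_def by auto
  then have "b = b'" using arg_cong[OF a, of "\<lambda>x. (x + 3) mod 6"] by (simp add: mod6_simps)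
  have "u = nb (nb u b) ((b + 3) mod 6)" by (rule nb_opposite[symmetric])
  also have "\<dots> = nb (nb u' b') ((b' + 3) mod 6)" using v \<open>b = b'\<close> by simp
  also have "\<dots> = u'" by (rule nb_opposite)
  finally show ?thesis using n m \<open>b = b'\<close> by simp
qed

lemma walk_step_neq_west_exit:
  assumes cut: "K v" "\<not> occ X v 3" and "is_exit X n"
  shows "walk_step X K n \<noteq> west_exit X v"
proof
  assume eq: "walk_step X K n = west_exit X v"
  obtain u b where "gap_exit (occ X u) b"
    and step: "walk_step X K n = (nb u b, entry_label (occ X (nb u b)) (K (nb u b)) ((b + 3) mod 6))"
    using \<open>is_exit X n\<close> by (rule is_exitE)
  define a where "a = (b + 3) mod 6"
  have v: "nb u b = v" and label: "entry_label (occ X v) (K v) a = gap_at (occ X v) 3"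
    using eq unfolding step west_exit_def a_def by auto
  let ?oc = "occ X v"
  have "\<not> (K v \<and> west_gap ?oc a)"
    using label unfolding entry_label_def gap_at_def by (auto simp: gap_label_eq_iff occ_ccw_from_less)
  moreover have "a = occ_cw_before ?oc 3 \<and> occ_ccw_from ?oc ((a + 1) mod 6) = occ_ccw_from ?oc 3"
    using label calculation unfolding entry_label_def gap_at_def by (auto simp: gap_label_eq_iff occ_ccw_from_less)
  ultimately show False using cut unfolding west_gap_def by blast
qed

lemma not_is_exit_west_entry: "\<not> is_exit X (west_entry X v)"
proof
  assume "is_exit X (west_entry X v)"
  then obtain b where "gap_exit (occ X v) b"
    and "gap_label (occ_cw_before (occ X v) 3) (occ_ccw_from (occ X v) 3) 0 = exit_label (occ X v) b"
    unfolding is_exit_def west_entry_def by auto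
  then show False
    unfolding exit_label_def gap_exit_def by (simp add: gap_label_eq_iff occ_ccw_from_less)
qed

lemma boundary_lbl_west_exit:
  assumes "\<not> occ X u 3" "non_isolated (occ X u)"
  shows "(u, boundary_lbl X K u (occ_ccw_from (occ X u) 3, exit_link (occ_ccw_from (occ X u) 3))) = west_exit X u"
  using west_gap_exit[OF assms] boundary_partition_exit unfolding boundary_lbl_def west_exit_def by simp

lemma boundary_lbl_west_entry:
  assumes "K u" "\<not> occ X u 3" "non_isolated (occ X u)"
  shows "(u, boundary_lbl X K u (occ_cw_before (occ X u) 3, entry_link (occ_cw_before (occ X u) 3))) = west_entry X u"
  using west_gap_entry[OF assms(2,3)] boundary_partition_entry assms(1)
  unfolding boundary_lbl_def west_entry_def entry_label_def west_gap_def by simp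

locale boundary_walk =
  fixes X :: "node set" and K :: "node \<Rightarrow> bool" and w :: node
  assumes finite_X: "finite X"
    and non_isolated_X: "\<And>u. u \<in> X \<Longrightarrow> non_isolated (occ X u)"
    and cut_west_free: "\<And>u. K u \<Longrightarrow> \<not> occ X u 3"
    and w_in_X: "w \<in> X" and cut_w: "K w"
begin

abbreviation walk :: "nat \<Rightarrow> node \<times> nat" where
  "walk j \<equiv> (walk_step X K ^^ j) (west_exit X w)"

definition walk_len :: nat where
  "walk_len = (LEAST k. \<not> is_exit X (walk k))"

definition on_walk :: "node \<times> nat \<Rightarrow> bool" where
  "on_walk m \<longleftrightarrow> (\<exists>j\<le>walk_len. m = walk j)"

lemma is_exit_west_exit: "v \<in> X \<Longrightarrow> \<not> occ X v 3 \<Longrightarrow> is_exit X (west_exit X v)"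
  using west_gap_exit[of "occ X v"] non_isolated_X unfolding is_exit_def west_exit_def by auto

lemma
  shows walk_is_exit: "j < walk_len \<Longrightarrow> is_exit X (walk j)"
    and walk_end_not_exit: "\<not> is_exit X (walk walk_len)"
    and reach_iff_on_walk: "(west_exit X w, m) \<in> (circ_edges X 2 (boundary_lbl X K))\<^sup>* \<longleftrightarrow> on_walk m"
proof -
  let ?N = "X \<times> {..<72::nat}"
  have fin: "finite ?N" using finite_X by simp
  have start: "west_exit X w \<in> ?N"
    using is_exit_west_exit[OF w_in_X cut_west_free[OF cut_w]] is_exit_less by blast
  have succ_in: "walk_step X K n \<in> ?N" if "n \<in> ?N" "is_exit X n" for n
    using that(2) by (rule is_exitE[where K = K]) (auto simp: entry_label_less)
  have no_pred: "walk_step X K n \<noteq> west_exit X w" if "n \<in> ?N" "is_exit X n" for n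
    using walk_step_neq_west_exit[where K = K, OF cut_w cut_west_free[OF cut_w] that(2)] .
  have inj: "n = m" if "n \<in> ?N" "m \<in> ?N" "is_exit X n" "is_exit X m" "walk_step X K n = walk_step X K m"
    for n m
    using walk_step_inj[OF that(3-5)] .
  have edge: "(n, walk_step X K n) \<in> circ_edges X 2 (boundary_lbl X K)" if "n \<in> ?N" "is_exit X n" for n
    using walk_step_edge[OF that(2)] .
  have edge_succ: "m \<in> ?N \<and> (is_exit X n \<and> m = walk_step X K n \<or> is_exit X m \<and> n = walk_step X K m)"
    if "(n, m) \<in> circ_edges X 2 (boundary_lbl X K)" "n \<in> ?N" for n m
    using boundary_circ_edge[of "fst n" "snd n" "fst m" "snd m" X K] that by (simp add: mem_Times_iff)
  note path = succ_path_component[OF fin start succ_in inj no_pred edge edge_succ,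
      folded walk_len_def]
  show "j < walk_len \<Longrightarrow> is_exit X (walk j)" using path(1) by blast
  show "\<not> is_exit X (walk walk_len)" using path(2) by blast
  show "(west_exit X w, m) \<in> (circ_edges X 2 (boundary_lbl X K))\<^sup>* \<longleftrightarrow> on_walk m"
    unfolding on_walk_def using path(3) by blast
qed

lemma on_walk_start: "on_walk (west_exit X w)"
  unfolding on_walk_def by (intro exI[of _ 0]) simp

lemma on_walk_step: "on_walk n \<Longrightarrow> is_exit X n \<Longrightarrow> on_walk (walk_step X K n)"
proof -
  assume "on_walk n" "is_exit X n"
  then obtain j where j: "j \<le> walk_len" "n = walk j" unfolding on_walk_def by blast
  then have "j < walk_len" using walk_end_not_exit \<open>is_exit X n\<close> by (cases "j = walk_len") auto
  then show ?thesis unfolding on_walk_def using j by (intro exI[of _ "Suc j"]) auto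
qed

lemma on_walk_step_rev: "is_exit X n \<Longrightarrow> on_walk (walk_step X K n) \<Longrightarrow> on_walk n"
proof -
  assume n: "is_exit X n" "on_walk (walk_step X K n)"
  then obtain j where j: "j \<le> walk_len" "walk_step X K n = walk j" unfolding on_walk_def by blast
  then obtain i where "j = Suc i"
    using walk_step_neq_west_exit[where K = K, OF cut_w cut_west_free[OF cut_w] n(1)] by (cases j) auto
  then have "is_exit X (walk i)" "walk_step X K (walk i) = walk_step X K n"
    using walk_is_exit j by auto
  then have "n = walk i" using walk_step_inj n(1) by metis
  then show ?thesis unfolding on_walk_def using j \<open>j = Suc i\<close> by (intro exI[of _ i]) auto
qed

lemma on_walk_west_exit: "K v \<Longrightarrow> on_walk (west_exit X v) \<Longrightarrow> v = w"
proof -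
  assume "K v" "on_walk (west_exit X v)"
  then obtain j where j: "j \<le> walk_len" "west_exit X v = walk j" unfolding on_walk_def by blast
  show "v = w"
  proof (cases j)
    case 0
    then show ?thesis using j unfolding west_exit_def by simp
  next
    case (Suc i)
    then have "is_exit X (walk i)" using walk_is_exit j by simp
    from walk_step_neq_west_exit[where K = K, OF \<open>K v\<close> cut_west_free[OF \<open>K v\<close>] this]
    show ?thesis using j Suc by simp
  qed
qed

lemma on_walk_west_entry: "on_walk (west_entry X v) \<Longrightarrow> west_entry X v = walk walk_len"
  unfolding on_walk_def
  using not_is_exit_west_entry walk_is_exit le_neq_implies_less by metis

lemma on_walk_west_entry_iff: "on_walk (west_entry X v) \<longleftrightarrow> walk walk_len = west_entry X v"
proof
  assume "on_walk (west_entry X v)"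
  then show "walk walk_len = west_entry X v" using on_walk_west_entry by simp
next
  assume "walk walk_len = west_entry X v"
  then show "on_walk (west_entry X v)" unfolding on_walk_def by auto
qed

lemma walk_end:
  obtains v where "walk walk_len = west_entry X v" "K v" "v \<in> X"
proof -
  have "walk_len \<noteq> 0"
    using walk_end_not_exit is_exit_west_exit[OF w_in_X cut_west_free[OF cut_w]] by (cases walk_len) auto
  then obtain k where k: "walk_len = Suc k" by (cases walk_len) auto
  then have "is_exit X (walk k)" using walk_is_exit by simp
  then obtain u b where "u \<in> X" "gap_exit (occ X u) b" and v_in: "nb u b \<in> X"
    and step: "walk_step X K (walk k) = (nb u b, entry_label (occ X (nb u b)) (K (nb u b)) ((b + 3) mod 6))"
    by (rule is_exitE)
  define v a where "v = nb u b" and "a = (b + 3) mod 6"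
  have last: "walk walk_len = (v, entry_label (occ X v) (K v) a)" using step k v_def a_def by simp
  have entry: "gap_entry (occ X v) a"
    using gap_entry_opposite[OF \<open>u \<in> X\<close>] \<open>gap_exit (occ X u) b\<close> unfolding gap_exit_def v_def a_def by simp
  show thesis
  proof (cases "K v \<and> west_gap (occ X v) a")
    case True
    then have "walk walk_len = west_entry X v"
      using last west_gap_entry_unique[OF entry] unfolding entry_label_def west_entry_def west_gap_def by simp
    then show thesis using that True v_in v_def by blast
  next
    case False
    then have "is_exit X (walk walk_len)"
      using last gap_exit_after_entry[OF entry] v_in unfolding entry_label_def is_exit_def v_def by auto
    then show thesis using walk_end_not_exit by simp
  qed
qed

definition walk_pairs :: "(node \<times> node) set" where
  "walk_pairs = {(u, e). u \<in> X \<and> (\<exists>d<6. e = nb u d \<and> e \<notin> X \<and> on_walk (u, gap_at (occ X u) d))}"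

lemma walk_pairs_iff:
  assumes "u \<in> X" "d < 6" "nb u d \<notin> X"
  shows "(u, nb u d) \<in> walk_pairs \<longleftrightarrow> on_walk (u, gap_at (occ X u) d)"
  using assms nb_dir_inj unfolding walk_pairs_def by blast

lemma walk_pairs_turn_outer:
  assumes "u \<in> X" "c < 6" "nb u c \<notin> X" "nb u ((c + 1) mod 6) \<notin> X"
  shows "(u, nb u c) \<in> walk_pairs \<longleftrightarrow> (u, nb u ((c + 1) mod 6)) \<in> walk_pairs"
proof -
  have "gap_at (occ X u) ((c + 1) mod 6) = gap_at (occ X u) c"
    using gap_at_step[OF assms(2)] non_isolated_X[OF assms(1)] assms(3,4) unfolding occ_def by simp
  then show ?thesis using walk_pairs_iff[OF assms(1-3)] walk_pairs_iff[OF assms(1) _ assms(4)] by simp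
qed

lemma walk_pairs_turn_inner:
  assumes returns: "walk walk_len = west_entry X w"
    and u: "u \<in> X" "b < 6" "nb u b \<in> X" "nb u ((b + 5) mod 6) \<notin> X"
  shows "(u, nb u ((b + 5) mod 6)) \<in> walk_pairs \<longleftrightarrow> (nb u b, nb u ((b + 5) mod 6)) \<in> walk_pairs"
proof -
  define v a e where "v = nb u b" and "a = (b + 3) mod 6" and "e = nb u ((b + 5) mod 6)"
  have exit: "gap_exit (occ X u) b" using u unfolding gap_exit_def occ_def by simp
  have is_exit: "is_exit X (u, exit_label (occ X u) b)" using u(1) exit unfolding is_exit_def by auto
  have step: "walk_step X K (u, exit_label (occ X u) b) = (v, entry_label (occ X v) (K v) a)"
    using walk_step_exit[OF exit] unfolding v_def a_def .
  have entry: "gap_entry (occ X v) a"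
    using gap_entry_opposite[OF u(1)] u(4) unfolding v_def a_def occ_def by simp
  have e: "e = nb v ((a + 1) mod 6)" unfolding e_def v_def a_def by (simp add: mod6_simps nb_nb_plus4)
  have left: "(u, e) \<in> walk_pairs \<longleftrightarrow> on_walk (u, exit_label (occ X u) b)"
    using walk_pairs_iff[OF u(1) _ u(4)] gap_at_before_exit[OF exit] unfolding e_def by simp
  have right: "(v, e) \<in> walk_pairs \<longleftrightarrow> on_walk (v, gap_label a (occ_ccw_from (occ X v) ((a + 1) mod 6)) 1)"
    using walk_pairs_iff[of v "(a + 1) mod 6"] u(3,4) gap_at_after_entry[OF entry] e
    unfolding v_def e_def by simp
  show ?thesis
  proof (cases "K v \<and> west_gap (occ X v) a")
    case False
    then have "walk_step X K (u, exit_label (occ X u) b) = (v, gap_label a (occ_ccw_from (occ X v) ((a + 1) mod 6)) 1)"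
      using step unfolding entry_label_def by auto
    then show ?thesis using left right on_walk_step[OF _ is_exit] on_walk_step_rev[OF is_exit]
      unfolding e_def v_def by auto
  next
    case True
    then have a: "a = occ_cw_before (occ X v) 3" using west_gap_entry_unique[OF entry] by blast
    then have to_entry: "walk_step X K (u, exit_label (occ X u) b) = west_entry X v"
      using step True unfolding entry_label_def west_entry_def west_gap_def by simp
    have "(v, e) \<in> walk_pairs \<longleftrightarrow> on_walk (west_exit X v)"
      using right a True unfolding west_exit_def gap_at_def west_gap_def by simp
    moreover have "on_walk (u, exit_label (occ X u) b) \<longleftrightarrow> on_walk (west_exit X v)"
    proof
      assume "on_walk (u, exit_label (occ X u) b)"
      then have "west_entry X v = west_entry X w"
        using on_walk_step[OF _ is_exit] to_entry on_walk_west_entry returns by simp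
      then show "on_walk (west_exit X v)" using on_walk_start unfolding west_entry_def by simp
    next
      assume "on_walk (west_exit X v)"
      then have "v = w" using on_walk_west_exit True by blast
      then have "on_walk (west_entry X v)" using returns unfolding on_walk_def by auto
      then show "on_walk (u, exit_label (occ X u) b)" using on_walk_step_rev[OF is_exit] to_entry by simp
    qed
    ultimately show ?thesis using left unfolding e_def v_def by simp
  qed
qed

lemma walk_pairs_inner_closed:
  assumes returns: "walk walk_len = west_entry X w"
    and tri: "u \<in> X" "u' \<in> X" "e \<notin> X" "grid_adj u u'" "grid_adj u e" "grid_adj u' e"
  shows "(u, e) \<in> walk_pairs \<longleftrightarrow> (u', e) \<in> walk_pairs"
proof -
  obtain b where b: "b < 6" "u' = nb u b" using tri(4) unfolding grid_adj_def by blast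
  obtain c where c: "c < 6" "e = nb u c" using tri(5) unfolding grid_adj_def by blast
  obtain d where d: "d < 6" "e = nb u' d" using tri(6) unfolding grid_adj_def by blast
  have "c = (b + 5) mod 6 \<or> c = (b + 1) mod 6" using common_nb_dir[OF b(1) c(1) d(1)] b c d by simp
  then show ?thesis
  proof
    assume "c = (b + 5) mod 6"
    then show ?thesis using walk_pairs_turn_inner[OF returns tri(1) b(1)] b c tri by simp
  next
    assume "c = (b + 1) mod 6"
    then have "u = nb u' ((b + 3) mod 6)" "e = nb u' (((b + 3) mod 6 + 5) mod 6)"
      using b c by (simp_all add: nb_opposite mod6_simps nb_nb_plus2 del: add_2_eq_Suc')
    then show ?thesis using walk_pairs_turn_inner[OF returns tri(2), of "(b + 3) mod 6"] tri by simp
  qed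
qed

lemma walk_pairs_outer_closed:
  assumes tri: "u \<in> X" "e \<notin> X" "e' \<notin> X" "grid_adj u e" "grid_adj u e'" "grid_adj e e'"
  shows "(u, e) \<in> walk_pairs \<longleftrightarrow> (u, e') \<in> walk_pairs"
proof -
  obtain c where c: "c < 6" "e = nb u c" using tri(4) unfolding grid_adj_def by blast
  obtain c' where c': "c' < 6" "e' = nb u c'" using tri(5) unfolding grid_adj_def by blast
  obtain d where d: "d < 6" "e' = nb e d" using tri(6) unfolding grid_adj_def by blast
  have "c' = (c + 5) mod 6 \<or> c' = (c + 1) mod 6" using common_nb_dir[OF c(1) c'(1) d(1)] c c' d by simp
  then show ?thesis
  proof
    assume "c' = (c + 5) mod 6"
    then have "c = (c' + 1) mod 6" using c(1) by presburger
    then show ?thesis using walk_pairs_turn_outer[OF tri(1) c'(1)] c c' tri by simp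
  next
    assume "c' = (c + 1) mod 6"
    then show ?thesis using walk_pairs_turn_outer[OF tri(1) c(1)] c c' tri by simp
  qed
qed

lemma returning_walk_cut_unique:
  assumes returns: "walk walk_len = west_entry X w"
    and conn: "induced_connected X" and hf: "hole_free X"
    and v: "v \<in> X" "K v"
  shows "v = w"
proof -
  have west_pair: "(u, nb u 3) \<in> walk_pairs \<longleftrightarrow> on_walk (west_exit X u)" if "u \<in> X" "K u" for u
    using walk_pairs_iff[OF that(1), of 3] cut_west_free[OF that(2)] unfolding west_exit_def occ_def by simp
  have "(v, nb v 3) \<in> walk_pairs"
  proof (rule boundary_pair_set_full[OF finite_X conn hf walk_pairs_inner_closed[OF returns] walk_pairs_outer_closed])
    show "(w, nb w 3) \<in> walk_pairs" using west_pair[OF w_in_X cut_w] on_walk_start by simp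
    show "nb w 3 \<notin> X" "nb v 3 \<notin> X" using cut_west_free cut_w v(2) unfolding occ_def by auto
  qed (use w_in_X v(1) grid_adj_nb in auto)
  then show ?thesis using west_pair[OF v] on_walk_west_exit v(2) by blast
qed

lemma received_west_entry_iff:
  assumes beeps: "\<And>v. v \<in> X \<Longrightarrow> bp v = (if v = w then {snd (west_exit X w)} else {})"
    and u: "u \<in> X" "K u"
  shows "received X 2 (boundary_lbl X K) bp u (occ_cw_before (occ X u) 3, entry_link (occ_cw_before (occ X u) 3))
    \<longleftrightarrow> walk walk_len = west_entry X u"
proof -
  let ?b = "occ_ccw_from (occ X w) 3"
  have "west_exit X w = (w, boundary_lbl X K w (?b, exit_link ?b))"
    using boundary_lbl_west_exit[where K = K, OF cut_west_free[OF cut_w] non_isolated_X[OF w_in_X]] by simp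
  then have "received X 2 (boundary_lbl X K) bp u p \<longleftrightarrow> (west_exit X w, (u, boundary_lbl X K u p))
      \<in> (circ_edges X 2 (boundary_lbl X K))\<^sup>*" for p
    using received_single_source[of X bp w "boundary_lbl X K" ?b "exit_link ?b" 2] beeps w_in_X
      occ_ccw_from_less link_less by simp
  then show ?thesis
    using boundary_lbl_west_entry[where K = K, OF u(2) cut_west_free[OF u(2)] non_isolated_X[OF u(1)]]
      reach_iff_on_walk on_walk_west_entry_iff by simp
qed

end

section \<open>Portals\<close>

lemma sym_x_edges: "sym (x_edges X)"
  unfolding x_edges_def sym_def by auto

lemma portal_eq: "(w, u) \<in> (x_edges X)\<^sup>* \<Longrightarrow> portal X u = portal X w"
  unfolding portal_def using sym_rtrancl[OF sym_x_edges] by (meson rtrancl_trans symD)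

lemma portal_west_end:
  assumes "finite X" "r \<in> X"
  obtains w where "w \<in> X" "(r, w) \<in> (x_edges X)\<^sup>*" "nb w 3 \<notin> X"
proof -
  let ?S = "{w \<in> X. (r, w) \<in> (x_edges X)\<^sup>*}"
  have "finite ?S" "r \<in> ?S" using assms by auto
  then obtain w where w: "w \<in> ?S" "\<And>w'. w' \<in> ?S \<Longrightarrow> fst w \<le> fst w'"
    using ex_min_if_finite[of "fst ` ?S"] by (metis (no_types, lifting) arg_min_if_finite(1,2) empty_iff not_le)
  have "nb w 3 \<notin> X"
  proof
    assume west: "nb w 3 \<in> X"
    then have "(w, nb w 3) \<in> x_edges X"
      using w(1) nb_opposite[of w 3] unfolding x_edges_def by auto
    then have "nb w 3 \<in> ?S" using w(1) west by (auto intro: rtrancl_into_rtrancl)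
    then show False using w(2) by (fastforce simp: nb_simps)
  qed
  then show thesis using that w(1) by blast
qed

lemma x_reach_from_west_end:
  assumes "w \<in> X" "nb w 3 \<notin> X" "(w, v) \<in> (x_edges X)\<^sup>*"
  shows "snd v = snd w \<and> fst w \<le> fst v"
  using assms(3)
proof (induction rule: rtrancl_induct)
  case (step v v')
  then have v': "v' \<in> X" "v' = nb v 0 \<or> v' = nb v 3"
    using nb_opposite[of v' 0] unfolding x_edges_def by auto
  have "v' \<noteq> nb w 3" using v'(1) assms(2) by blast
  then show ?case using step.IH v'(2) by (auto simp: nb_simps prod_eq_iff)
qed simp

lemma west_end_unique:
  assumes "w \<in> X" "nb w 3 \<notin> X" "w' \<in> X" "nb w' 3 \<notin> X" "portal X w = portal X w'"
  shows "w = w'"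
proof -
  have "w' \<in> portal X w" unfolding assms(5) by (simp add: portal_def)
  moreover have "w \<in> portal X w'" unfolding assms(5)[symmetric] by (simp add: portal_def)
  ultimately have "snd w' = snd w \<and> fst w \<le> fst w'" "snd w = snd w' \<and> fst w' \<le> fst w"
    using x_reach_from_west_end[OF assms(1,2), of w'] x_reach_from_west_end[OF assms(3,4), of w]
    unfolding portal_def by blast+
  then show ?thesis by (simp add: prod_eq_iff)
qed

definition portal_lbl :: "pin \<Rightarrow> nat" where
  "portal_lbl p = (if (fst p = 0 \<or> fst p = 3) \<and> snd p = 0 then 0 else 1)"

lemma portal_circuit_reach:
  assumes "((w, 0), y) \<in> (circ_edges X c (\<lambda>u. portal_lbl))\<^sup>*"
  shows "snd y = 0 \<and> (w, fst y) \<in> (x_edges X)\<^sup>*"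
  using assms
proof (induction rule: rtrancl_induct)
  case (step y z)
  from step(2) obtain u d i where e: "y = (u, portal_lbl (d, i))" "z = (nb u d, portal_lbl ((d + 3) mod 6, i))"
    "u \<in> X" "nb u d \<in> X"
    by (rule circ_edgesE)
  then have d: "d = 0 \<or> d = 3" and "i = 0" using step.IH unfolding portal_lbl_def by (simp_all split: if_splits)
  then have "snd z = 0" using e(2) unfolding portal_lbl_def by auto
  moreover have "(u, nb u d) \<in> x_edges X"
    using d e(3,4) nb_opposite[of u 3] unfolding x_edges_def by auto
  ultimately show ?case using step.IH e(1,2) by (auto intro: rtrancl_into_rtrancl)
qed simp

lemma x_reach_portal_circuit:
  assumes "(w, u) \<in> (x_edges X)\<^sup>*" "0 < c"
  shows "((w, 0), (u, 0)) \<in> (circ_edges X c (\<lambda>u. portal_lbl))\<^sup>*"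
  using assms(1)
proof (induction rule: rtrancl_induct)
  case (step a b)
  then have ab: "a \<in> X" "b \<in> X" "b = nb a 0 \<or> b = nb a 3"
    using nb_opposite[of b 0] unfolding x_edges_def by auto
  then have "((a, 0), (b, 0)) \<in> circ_edges X c (\<lambda>u. portal_lbl)"
    using circ_edgesI[of a X 0 0 c "\<lambda>u. portal_lbl"] circ_edgesI[of a X 3 0 c "\<lambda>u. portal_lbl"] assms(2)
    unfolding portal_lbl_def by auto
  with step.IH show ?case by (rule rtrancl_into_rtrancl)
qed simp

section \<open>The election algorithm\<close>

lemma isolated_singleton:
  assumes "induced_connected X" "u \<in> X" "\<not> non_isolated (occ X u)"
  shows "X = {u}"
proof -
  have "v = u" if "v \<in> X" for v
  proof -
    have "(u, v) \<in> {(a, b). a \<in> X \<and> b \<in> X \<and> grid_adj a b}\<^sup>*"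
      using assms(1,2) that unfolding induced_connected_def by blast
    then show ?thesis
    proof (cases rule: converse_rtranclE)
      case (step a)
      then obtain d where "d < 6" "nb u d \<in> X" unfolding grid_adj_def by blast
      then show ?thesis using assms(3) unfolding non_isolated_def occ_def by blast
    qed simp
  qed
  then show ?thesis using assms(2) by blast
qed

definition west_cut :: "node set \<Rightarrow> (node \<Rightarrow> bool) \<Rightarrow> (node \<Rightarrow> bool) \<Rightarrow> node \<Rightarrow> bool" where
  "west_cut X inR inQ u \<longleftrightarrow> (inR u \<or> inQ u) \<and> \<not> occ X u 3"

definition round1_beeps :: "node set \<Rightarrow> (node \<Rightarrow> bool) \<Rightarrow> node \<Rightarrow> nat set" where
  "round1_beeps X inR u = (if inR u \<and> \<not> occ X u 3 \<and> non_isolated (occ X u) then {gap_at (occ X u) 3} else {})"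

definition elected :: "node set \<Rightarrow> (node \<Rightarrow> bool) \<Rightarrow> (node \<Rightarrow> bool) \<Rightarrow> node \<Rightarrow> bool" where
  "elected X inR inQ u \<longleftrightarrow> non_isolated (occ X u) \<and> inQ u \<and> \<not> occ X u 3 \<and>
     received X 2 (boundary_lbl X (west_cut X inR inQ)) (round1_beeps X inR) u
       (occ_cw_before (occ X u) 3, entry_link (occ_cw_before (occ X u) 3))"

lemma portal_west_end_ex:
  assumes "finite X" "P \<in> x_portals X"
  shows "\<exists>w\<in>X. \<not> occ X w 3 \<and> portal X w = P"
proof -
  obtain r where "r \<in> X" "P = portal X r" using assms(2) unfolding x_portals_def by blast
  moreover obtain w where "w \<in> X" "(r, w) \<in> (x_edges X)\<^sup>*" "nb w 3 \<notin> X"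
    using portal_west_end[OF assms(1) \<open>r \<in> X\<close>] .
  ultimately show ?thesis using portal_eq unfolding occ_def by metis
qed

lemma round1_beeps_west_end:
  assumes "w \<in> X" "\<not> occ X w 3" "portal X w = R" "non_isolated (occ X w)"
    and unique: "\<And>u. u \<in> X \<Longrightarrow> \<not> occ X u 3 \<Longrightarrow> portal X u = R \<Longrightarrow> u = w"
    and "u \<in> X"
  shows "round1_beeps X (\<lambda>u. portal X u = R) u = (if u = w then {snd (west_exit X w)} else {})"
proof (cases "u = w")
  case True
  then show ?thesis using assms(2-4) unfolding round1_beeps_def west_exit_def by simp
next
  case False
  then have "\<not> (portal X u = R \<and> \<not> occ X u 3)" using unique[OF \<open>u \<in> X\<close>] by blast
  then show ?thesis using False unfolding round1_beeps_def by auto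
qed

lemma elected_unique:
  assumes fin: "finite X" and conn: "induced_connected X" and hf: "hole_free X"
    and non_isolated: "\<And>u. u \<in> X \<Longrightarrow> non_isolated (occ X u)"
    and R: "R \<in> x_portals X" and Q: "Q \<subseteq> x_portals X" "Q \<noteq> {}"
  obtains v where "v \<in> X" "portal X v \<in> Q"
    "\<And>u. u \<in> X \<Longrightarrow> elected X (\<lambda>u. portal X u = R) (\<lambda>u. portal X u \<in> Q) u \<longleftrightarrow> u = v"
proof -
  let ?inR = "\<lambda>u. portal X u = R" and ?inQ = "\<lambda>u. portal X u \<in> Q"
  let ?K = "west_cut X ?inR ?inQ"
  obtain w where w: "w \<in> X" "\<not> occ X w 3" "portal X w = R" using portal_west_end_ex[OF fin R] by blast
  have R_west_end: "u = w" if "u \<in> X" "\<not> occ X u 3" "portal X u = R" for u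
    using west_end_unique[OF that(1) _ w(1)] that(2,3) w(2,3) unfolding occ_def by simp
  interpret boundary_walk X ?K w
  proof
    show "finite X" by (rule fin)
    show "\<And>u. u \<in> X \<Longrightarrow> non_isolated (occ X u)" by (rule non_isolated)
    show "\<And>u. ?K u \<Longrightarrow> \<not> occ X u 3" unfolding west_cut_def by blast
    show "w \<in> X" by (rule w(1))
    show "?K w" using w unfolding west_cut_def by simp
  qed
  obtain v where v: "walk walk_len = west_entry X v" "?K v" "v \<in> X" by (rule walk_end)
  have "portal X v \<in> Q"
  proof (rule ccontr)
    assume "portal X v \<notin> Q"
    then have "v = w" using v(2,3) R_west_end unfolding west_cut_def by blast
    with v(1) have returns: "walk walk_len = west_entry X w" by simp
    obtain P where "P \<in> Q" using Q(2) by blast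
    then obtain u where u: "u \<in> X" "\<not> occ X u 3" "portal X u = P" using portal_west_end_ex[OF fin] Q(1) by blast
    then have "?K u" using \<open>P \<in> Q\<close> unfolding west_cut_def by simp
    then have "u = w" by (rule returning_walk_cut_unique[OF returns conn hf u(1)])
    then show False using \<open>P \<in> Q\<close> \<open>portal X v \<notin> Q\<close> \<open>v = w\<close> u(3) by simp
  qed
  moreover have "elected X ?inR ?inQ u \<longleftrightarrow> u = v" if "u \<in> X" for u
  proof -
    have "elected X ?inR ?inQ u \<longleftrightarrow> ?K u \<and> ?inQ u \<and> walk walk_len = west_entry X u"
      using received_west_entry_iff[OF round1_beeps_west_end[OF w non_isolated[OF w(1)] R_west_end], of u]
        non_isolated that
      unfolding elected_def west_cut_def by blast
    also have "\<dots> \<longleftrightarrow> u = v"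
      using v \<open>portal X v \<in> Q\<close> unfolding west_entry_def west_cut_def by auto
    finally show ?thesis .
  qed
  ultimately show thesis using that v(3) by blast
qed

lemma portal_announcement:
  assumes "v \<in> X" "\<And>u. u \<in> X \<Longrightarrow> E u \<longleftrightarrow> u = v"
  shows "received X 2 (\<lambda>_. portal_lbl) (\<lambda>u. if E u then {0} else {}) u (0, 0) \<longleftrightarrow> portal X u = portal X v"
proof -
  have "received X 2 (\<lambda>_. portal_lbl) (\<lambda>u. if E u then {0} else {}) u (0, 0)
      \<longleftrightarrow> ((v, 0), (u, 0)) \<in> (circ_edges X 2 (\<lambda>_. portal_lbl))\<^sup>*"
    using received_single_source[of X "\<lambda>u. if E u then {0} else {}" v "\<lambda>_. portal_lbl" 0 0 2 u "(0, 0)"]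
      assms unfolding portal_lbl_def by simp
  also have "\<dots> \<longleftrightarrow> (v, u) \<in> (x_edges X)\<^sup>*"
    using portal_circuit_reach[of v "(u, 0)" X 2] x_reach_portal_circuit[of v u X 2] by auto
  also have "\<dots> \<longleftrightarrow> portal X u = portal X v"
    using portal_eq[of v u X] unfolding portal_def by auto
  finally show ?thesis .
qed

(* The phase counts completed rounds (3 = done); the nine bits hold the neighbourhood, the
   two inputs and the output. *)
definition encode_state :: "nat \<Rightarrow> (nat \<Rightarrow> bool) \<Rightarrow> bool \<Rightarrow> bool \<Rightarrow> bool \<Rightarrow> nat" where
  "encode_state phase oc r q out = phase + 4 * horner_sum of_bool 2 [oc 0, oc 1, oc 2, oc 3, oc 4, oc 5, r, q, out]"

definition st_phase :: "nat \<Rightarrow> nat" where "st_phase s = s mod 4"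
definition st_occ :: "nat \<Rightarrow> nat \<Rightarrow> bool" where "st_occ s d = bit (s div 4) (d mod 6)"
definition st_inR :: "nat \<Rightarrow> bool" where "st_inR s = bit (s div 4) 6"
definition st_inQ :: "nat \<Rightarrow> bool" where "st_inQ s = bit (s div 4) 7"
definition st_out :: "nat \<Rightarrow> bool" where "st_out s = bit (s div 4) 8"

lemma encode_state_less: "phase < 4 \<Longrightarrow> encode_state phase oc r q out < 2048"
  using horner_sum_of_bool_2_less[of "[oc 0, oc 1, oc 2, oc 3, oc 4, oc 5, r, q, out]"]
  unfolding encode_state_def by simp

lemma decode_encode_state:
  assumes "phase < 4"
  shows "st_phase (encode_state phase oc r q out) = phase"
    and "st_inR (encode_state phase oc r q out) = r"
    and "st_inQ (encode_state phase oc r q out) = q"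
    and "st_out (encode_state phase oc r q out) = out"
    and "st_occ (encode_state phase oc r q out) d = oc (d mod 6)"
proof -
  have "(phase + 4 * h) div 4 = h" "(phase + 4 * h) mod 4 = phase" for h :: nat
    using assms by presburger+
  then have div: "encode_state phase oc r q out div 4 = horner_sum of_bool 2 [oc 0, oc 1, oc 2, oc 3, oc 4, oc 5, r, q, out]"
    and "encode_state phase oc r q out mod 4 = phase"
    unfolding encode_state_def by blast+
  then show "st_phase (encode_state phase oc r q out) = phase"
    unfolding st_phase_def by blast
  show "st_inR (encode_state phase oc r q out) = r" "st_inQ (encode_state phase oc r q out) = q"
    "st_out (encode_state phase oc r q out) = out"
    unfolding st_inR_def st_inQ_def st_out_def div by (simp_all only: bit_horner_sum_bit_iff) simp_all
  have "d mod 6 < 6" by simp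
  then show "st_occ (encode_state phase oc r q out) d = oc (d mod 6)"
    unfolding st_occ_def div
    by (simp only: bit_horner_sum_bit_iff) (elim less_6_cases[elim_format] disjE; simp)
qed

definition elect_delta :: "nat \<Rightarrow> (pin \<Rightarrow> bool) \<Rightarrow> nat \<times> (pin \<Rightarrow> nat) \<times> nat set" where
  "elect_delta s rcv =
    (let oc = st_occ s; r = st_inR s; q = st_inQ s; a = occ_cw_before oc 3 in
     if st_phase s = 0 then
       (encode_state 1 oc r q False, boundary_partition oc ((r \<or> q) \<and> \<not> oc 3),
        if r \<and> \<not> oc 3 \<and> non_isolated oc then {gap_at oc 3} else {})
     else if st_phase s = 1 then
       (let e = non_isolated oc \<and> q \<and> \<not> oc 3 \<and> rcv (a, entry_link a)
        in (encode_state 2 oc r q e, portal_lbl, if e then {0} else {}))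
     else if st_phase s = 2 then
       (encode_state 3 oc r q (rcv (0, 0) \<or> \<not> non_isolated oc \<and> q), portal_lbl, {})
     else (s, portal_lbl, {}))"

definition elect_algo :: algo where
  "elect_algo = \<lparr>links = 2, states = {..<2048}, init = (\<lambda>nbr l r q. encode_state 0 nbr r q False),
     delta = elect_delta, out_fn = st_out\<rparr>"

lemma valid_elect_algo: "valid_algo elect_algo"
  unfolding valid_algo_def elect_algo_def elect_delta_def by (auto simp: encode_state_less Let_def)

lemma out_fn_elect_algo: "out_fn elect_algo = st_out"
  unfolding elect_algo_def by simp

lemma st_occ_encode_occ: "st_occ (encode_state phase (occ X u) r q out) = occ X u" if "phase < 4"
  by (rule ext) (simp add: decode_encode_state(5)[OF that] occ_mod6)

definition heard_portal_beep :: "node set \<Rightarrow> (node \<Rightarrow> bool) \<Rightarrow> (node \<Rightarrow> bool) \<Rightarrow> node \<Rightarrow> bool" where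
  "heard_portal_beep X inR inQ u \<longleftrightarrow>
     received X 2 (\<lambda>_. portal_lbl) (\<lambda>v. if elected X inR inQ v then {0} else {}) u (0, 0)"

lemma run_elect_algo:
  "fst (run elect_algo X ldr inR inQ 3) u = encode_state 3 (occ X u) (inR u) (inQ u)
     (heard_portal_beep X inR inQ u \<or> \<not> non_isolated (occ X u) \<and> inQ u)"
proof -
  have "run elect_algo X ldr inR inQ 0 = ((\<lambda>u. encode_state 0 (occ X u) (inR u) (inQ u) False), \<lambda>u p. False)"
    by (simp add: elect_algo_def occ_def[abs_def])
  then have "run elect_algo X ldr inR inQ (Suc 0) =
      ((\<lambda>u. encode_state 1 (occ X u) (inR u) (inQ u) False),
      received X 2 (boundary_lbl X (west_cut X inR inQ)) (round1_beeps X inR))"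
    by (simp add: elect_algo_def elect_delta_def decode_encode_state st_occ_encode_occ
        boundary_lbl_def[abs_def] west_cut_def round1_beeps_def[abs_def] Let_def cong: if_cong)
  then have "run elect_algo X ldr inR inQ (Suc (Suc 0)) =
      ((\<lambda>u. encode_state 2 (occ X u) (inR u) (inQ u) (elected X inR inQ u)),
      received X 2 (\<lambda>_. portal_lbl) (\<lambda>v. if elected X inR inQ v then {0} else {}))"
    by (simp add: elect_algo_def elect_delta_def decode_encode_state st_occ_encode_occ elected_def Let_def)
  then have "fst (run elect_algo X ldr inR inQ (Suc (Suc (Suc 0)))) u =
      encode_state 3 (occ X u) (inR u) (inQ u) (heard_portal_beep X inR inQ u \<or> \<not> non_isolated (occ X u) \<and> inQ u)"
    by (simp add: elect_algo_def elect_delta_def decode_encode_state st_occ_encode_occ heard_portal_beep_def Let_def)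
  moreover have "run elect_algo X ldr inR inQ 3 = run elect_algo X ldr inR inQ (Suc (Suc (Suc 0)))"
    by (simp only: numeral_3_eq_3)
  ultimately show ?thesis by simp
qed

lemma elect_correct:
  assumes fin: "finite X" and conn: "induced_connected X" and hf: "hole_free X"
    and R: "R \<in> x_portals X" and Q: "Q \<subseteq> x_portals X" "Q \<noteq> {}"
  shows "\<exists>R'\<in>Q. \<forall>u\<in>X.
    (heard_portal_beep X (\<lambda>u. portal X u = R) (\<lambda>u. portal X u \<in> Q) u \<or> \<not> non_isolated (occ X u) \<and> portal X u \<in> Q)
      \<longleftrightarrow> portal X u = R'"
proof (cases "\<forall>u\<in>X. non_isolated (occ X u)")
  case True
  then obtain v where v: "v \<in> X" "portal X v \<in> Q"
    "\<And>u. u \<in> X \<Longrightarrow> elected X (\<lambda>u. portal X u = R) (\<lambda>u. portal X u \<in> Q) u \<longleftrightarrow> u = v"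
    using elected_unique[OF fin conn hf _ R Q] by blast
  show ?thesis
    by (rule bexI[OF _ v(2)]) (use portal_announcement[OF v(1) v(3)] True in \<open>auto simp: heard_portal_beep_def\<close>)
next
  case False
  then obtain u where u: "u \<in> X" "\<not> non_isolated (occ X u)" by blast
  then have "X = {u}" using isolated_singleton[OF conn] by blast
  moreover from this have "Q = {portal X u}" using Q unfolding x_portals_def by auto
  ultimately show ?thesis using u(2) by auto
qed

theorem mainTheorem15:
  shows "\<exists>A T. valid_algo A \<and>
    (\<forall>X R Q ldr.
       finite X \<and> induced_connected X \<and> hole_free X \<and> ldr \<in> X \<and>
       R \<in> x_portals X \<and> Q \<subseteq> x_portals X \<and> Q \<noteq> {} \<longrightarrow>
       (\<exists>R'\<in>Q. \<forall>u\<in>X.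
          out_fn A (fst (run A X ldr (\<lambda>u. portal X u = R) (\<lambda>u. portal X u \<in> Q) T) u)
            = (portal X u = R')))"
proof (intro exI[of _ elect_algo] exI[of _ 3] conjI valid_elect_algo allI impI)
  fix X R Q ldr
  assume "finite X \<and> induced_connected X \<and> hole_free X \<and> ldr \<in> X \<and>
    R \<in> x_portals X \<and> Q \<subseteq> x_portals X \<and> Q \<noteq> {}"
  then show "\<exists>R'\<in>Q. \<forall>u\<in>X.
      out_fn elect_algo (fst (run elect_algo X ldr (\<lambda>u. portal X u = R) (\<lambda>u. portal X u \<in> Q) 3) u)
        = (portal X u = R')"
    unfolding out_fn_elect_algo run_elect_algo using elect_correct[of X R Q]
    by (simp add: decode_encode_state)
qed

end
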